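(* Consider the closed-loop scalar system $\dot X(t)=aX(t)+bU(t)$ with $a>0$, $b\ne0$, and the open-loop system $\dot X(t)=aX(t)$, both with random initial state $X(0)$, $h(X(0))<\infty$, $|X(0)|<L$ ($L$ known to sensor and controller), with the sensor communicating over the timing channel described in the context. If there exists an estimator such that in open loop $|X(t)-\hat X(t)|\to0$ in probability as $t\to\infty$, then there exists a controller such that in closed loop $|X(t)|\to0$ in probability as $t\to\infty$.
   Context: Timing channel: symbols from a one-element alphabet; initialized with a symbol received at time $0$; after the acknowledgment of the $i$-th reception the sender waits $W_{i+1}\ge0$ and transmits the next symbol, received after an i.i.d. random delay $S_{i+1}\ge0$; $D_i=W_i+S_i$. The sensor knows $X(0)$, $L$ and the dynamics and encodes into the waiting times (random i.i.d. codebook independent of delays; acknowledgments used only to avoid queuing). The controller (resp. estimator) at time $t$ computes $U(t)$ (resp. $\hat X(t)$) from the inter-reception times of all symbols received by time $t$, $L$, the dynamics (and, for the controller, its own past inputs). Control inputs are applied with infinite precision and zero delay. *)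

theory Defs
  imports "HOL-Probability.Probability"
begin

text \<open>Besides the initial symbol (received at time 0), the
  sender transmits symbols j = 0, 1, 2, ... (the paper's symbols 1, 2, 3, ...).
  Before symbol j the sender waits W j (after the acknowledgment of the previous
  reception); symbol j then experiences the random delay S j.\<close>

definition inter_rec :: "(nat \<Rightarrow> 'a \<Rightarrow> real) \<Rightarrow> (nat \<Rightarrow> 'a \<Rightarrow> real) \<Rightarrow> nat \<Rightarrow> 'a \<Rightarrow> real" where
  "inter_rec Wt S j \<omega> = Wt j \<omega> + S j \<omega>"

definition rec_time :: "(nat \<Rightarrow> 'a \<Rightarrow> real) \<Rightarrow> nat \<Rightarrow> 'a \<Rightarrow> real" where
  "rec_time D j \<omega> = (\<Sum>k\<le>j. D k \<omega>)"

definition obs :: "(nat \<Rightarrow> 'a \<Rightarrow> real) \<Rightarrow> real \<Rightarrow> 'a \<Rightarrow> nat \<Rightarrow> real option" where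
  "obs D t \<omega> = (\<lambda>j. if rec_time D j \<omega> \<le> t then Some (D j \<omega>) else None)"

text \<open>Index set of the primitive random quantities: initial state, the random
  codebook (shared randomness of sensor and receiver), and the delays.\<close>

datatype src = Init | Code | Delay nat

fun rvs :: "('a \<Rightarrow> real) \<Rightarrow> ('a \<Rightarrow> real) \<Rightarrow> (nat \<Rightarrow> 'a \<Rightarrow> real) \<Rightarrow> src \<Rightarrow> 'a \<Rightarrow> real" where
  "rvs X0 K S Init = X0"
| "rvs X0 K S Code = K"
| "rvs X0 K S (Delay i) = S i"

text \<open>An admissible encoder: a random codebook K independent of the initial
  state and of the delays, and waiting times W i = enc i (X(0)) (codebook) \<ge> 0,
  i.e. depending only on X(0) and the codebook (not on the delays).\<close>

definition admissible_encoder ::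
  "'a measure \<Rightarrow> ('a \<Rightarrow> real) \<Rightarrow> (nat \<Rightarrow> 'a \<Rightarrow> real) \<Rightarrow> ('a \<Rightarrow> real)
     \<Rightarrow> (nat \<Rightarrow> real \<Rightarrow> real \<Rightarrow> real) \<Rightarrow> bool" where
  "admissible_encoder M X0 S K enc \<longleftrightarrow>
     prob_space.indep_vars M (\<lambda>_. borel) (rvs X0 K S) UNIV \<and>
     (\<forall>i x k. 0 \<le> enc i x k)"

definition delays_of ::
  "('a \<Rightarrow> real) \<Rightarrow> (nat \<Rightarrow> 'a \<Rightarrow> real) \<Rightarrow> ('a \<Rightarrow> real)
     \<Rightarrow> (nat \<Rightarrow> real \<Rightarrow> real \<Rightarrow> real) \<Rightarrow> nat \<Rightarrow> 'a \<Rightarrow> real" where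
  "delays_of X0 S K enc = inter_rec (\<lambda>i \<omega>. enc i (X0 \<omega>) (K \<omega>)) S"

definition tendsto_zero_in_prob :: "'a measure \<Rightarrow> (real \<Rightarrow> 'a \<Rightarrow> real) \<Rightarrow> bool" where
  "tendsto_zero_in_prob M Z \<longleftrightarrow>
     (\<forall>t. Z t \<in> borel_measurable M) \<and>
     (\<forall>\<epsilon>>0. ((\<lambda>t. measure M {\<omega> \<in> space M. \<bar>Z t \<omega>\<bar> > \<epsilon>}) \<longlongrightarrow> 0) at_top)"

text \<open>Closed-loop state (variation of constants) of dX = aX + bU, X(0) = X0.\<close>

definition cl_state :: "real \<Rightarrow> real \<Rightarrow> ('a \<Rightarrow> real) \<Rightarrow> (real \<Rightarrow> 'a \<Rightarrow> real) \<Rightarrow> real \<Rightarrow> 'a \<Rightarrow> real" where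
  "cl_state a b X0 U t \<omega> =
     exp (a * t) * X0 \<omega> + integral {0..t} (\<lambda>s. exp (a * (t - s)) * b * U s \<omega>)"

end

theory Submission
  imports Defs
begin

text \<open>The controller steers the state onto the open-loop estimates of the initial state. Let
  v(n) = e^(-a n) Xhat(n) be the estimate of X(0) that the estimator produces at integer time n.
  On [n, n + 1) the control makes e^(-a t) X(t) = X(0) - l(t), where l interpolates linearly
  between v(n - 1) at time n and v(n) at time n + 1; both are known by time n, so the control is
  causal. With E the open-loop estimation error, X(t) is then a convex combination of
  e^(a (t - n + 1)) E(n - 1) and e^(a (t - n)) E(n), hence bounded by e^(2 a) (|E(n - 1)| + |E(n)|),
  and convergence of E to 0 in probability carries over.\<close>

lemma nat_floor_eq:
  assumes "real n \<le> s" "s < real n + 1"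
  shows "nat \<lfloor>s\<rfloor> = n"
  using assms by (metis floor_eq2 nat_int of_int_of_nat_eq)

lemma nat_floor_bounds:
  assumes "0 \<le> t"
  shows "real (nat \<lfloor>t\<rfloor>) \<le> t" "t < real (nat \<lfloor>t\<rfloor>) + 1"
  using assms by linarith+

lemma integrable_on_piecewise_continuous:
  fixes h :: "nat \<Rightarrow> real \<Rightarrow> 'b::banach"
  assumes cont: "\<And>n. continuous_on UNIV (h n)" and "0 \<le> t"
  shows "(\<lambda>s. h (nat \<lfloor>s\<rfloor>) s) integrable_on {0..t}"
proof -
  have piece: "(\<lambda>s. h (nat \<lfloor>s\<rfloor>) s) integrable_on {real n..t}" if "t \<in> {real n..real n + 1}" for n t
  proof (rule integrable_spike_finite[of "{t}"])
    show "h n integrable_on {real n..t}"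
      by (rule integrable_continuous_interval) (meson cont continuous_on_subset subset_UNIV)
  qed (use that nat_floor_eq[of n] in auto)
  have step: "\<forall>t\<in>{real n..real n + 1}. (\<lambda>s. h (nat \<lfloor>s\<rfloor>) s) integrable_on {0..t}" for n
  proof (induction n)
    case 0
    then show ?case using piece[of _ 0] by simp
  next
    case (Suc n)
    show ?case
    proof
      fix t assume t: "t \<in> {real (Suc n)..real (Suc n) + 1}"
      have init: "(\<lambda>s. h (nat \<lfloor>s\<rfloor>) s) integrable_on {0..real (Suc n)}"
        using Suc by simp
      show "(\<lambda>s. h (nat \<lfloor>s\<rfloor>) s) integrable_on {0..t}"
        by (rule Henstock_Kurzweil_Integration.integrable_combine[OF _ _ init piece[OF t]]) (use t in auto)
    qed
  qed
  have "t \<in> {real (nat \<lfloor>t\<rfloor>)..real (nat \<lfloor>t\<rfloor>) + 1}"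
    using nat_floor_bounds[OF \<open>0 \<le> t\<close>] by simp
  then show ?thesis by (rule bspec[OF step])
qed

definition lin_interp :: "(nat \<Rightarrow> real) \<Rightarrow> real \<Rightarrow> real" where
  "lin_interp c t = c (nat \<lfloor>t\<rfloor>) + (t - real (nat \<lfloor>t\<rfloor>)) * (c (Suc (nat \<lfloor>t\<rfloor>)) - c (nat \<lfloor>t\<rfloor>))"

lemma lin_interp_of_nat [simp]: "lin_interp c (real n) = c n"
  by (simp add: lin_interp_def)

lemma has_integral_step_increments:
  assumes "0 \<le> t"
  shows "((\<lambda>s. c (Suc (nat \<lfloor>s\<rfloor>)) - c (nat \<lfloor>s\<rfloor>)) has_integral (lin_interp c t - c 0)) {0..t}"
proof -
  let ?f = "\<lambda>s. c (Suc (nat \<lfloor>s\<rfloor>)) - c (nat \<lfloor>s\<rfloor>)"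
  have piece: "(?f has_integral (lin_interp c t - c n)) {real n..t}" if "t \<in> {real n..real n + 1}" for n t
  proof (rule has_integral_spike_finite[of "{t}"])
    have "lin_interp c t - c n = (t - real n) * (c (Suc n) - c n)"
    proof (cases "t < real n + 1")
      case True
      then show ?thesis using that nat_floor_eq[of n t] by (simp add: lin_interp_def)
    next
      case False
      then have "t = real (Suc n)" using that by simp
      then show ?thesis by (simp only: lin_interp_of_nat) (simp add: lin_interp_def)
    qed
    then show "((\<lambda>s. c (Suc n) - c n) has_integral (lin_interp c t - c n)) {real n..t}"
      using has_integral_const_real[of "c (Suc n) - c n" "real n" t] that by (simp add: mult.commute)
  qed (use that nat_floor_eq[of n] in auto)
  have step: "\<forall>t\<in>{real n..real n + 1}. (?f has_integral (lin_interp c t - c 0)) {0..t}" for n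
  proof (induction n)
    case 0
    then show ?case using piece[of _ 0] by simp
  next
    case (Suc n)
    show ?case
    proof
      fix t assume t: "t \<in> {real (Suc n)..real (Suc n) + 1}"
      have "(?f has_integral (lin_interp c (real (Suc n)) - c 0)) {0..real (Suc n)}"
        using Suc by simp
      then have init: "(?f has_integral (c (Suc n) - c 0)) {0..real (Suc n)}"
        by (simp only: lin_interp_of_nat)
      have "(?f has_integral (c (Suc n) - c 0 + (lin_interp c t - c (Suc n)))) {0..t}"
        by (rule has_integral_combine[OF _ _ init piece[OF t]]) (use t in auto)
      then show "(?f has_integral (lin_interp c t - c 0)) {0..t}"
        by simp
    qed
  qed
  have "t \<in> {real (nat \<lfloor>t\<rfloor>)..real (nat \<lfloor>t\<rfloor>) + 1}"
    using nat_floor_bounds[OF \<open>0 \<le> t\<close>] by simp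
  then show ?thesis by (rule bspec[OF step])
qed

lemma step_control_absolutely_integrable:
  fixes U :: "real \<Rightarrow> real"
  assumes "0 \<le> t"
    and U: "\<And>s. 0 \<le> s \<Longrightarrow> U s = - exp (a * s) * (c (Suc (nat \<lfloor>s\<rfloor>)) - c (nat \<lfloor>s\<rfloor>)) / b"
  shows "U absolutely_integrable_on {0..t}"
proof -
  define \<kappa> where "\<kappa> = (\<lambda>n. - (c (Suc n) - c n) / b)"
  define h where "h = (\<lambda>n s. \<kappa> n * exp (a * s))"
  have cont: "continuous_on UNIV (h n)" for n
    unfolding h_def by (intro continuous_intros)
  have piece: "U s = h (nat \<lfloor>s\<rfloor>) s" if "s \<in> {0..t}" for s
  proof -
    have "U s = - exp (a * s) * (c (Suc (nat \<lfloor>s\<rfloor>)) - c (nat \<lfloor>s\<rfloor>)) / b"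
      using U that by simp
    also have "\<dots> = h (nat \<lfloor>s\<rfloor>) s"
      unfolding h_def \<kappa>_def by (simp only: times_divide_eq_left) (simp add: algebra_simps)
    finally show ?thesis .
  qed
  have "(\<lambda>s. h (nat \<lfloor>s\<rfloor>) s) integrable_on {0..t}"
    by (rule integrable_on_piecewise_continuous[OF cont \<open>0 \<le> t\<close>])
  then have integrable: "U integrable_on {0..t}"
    by (rule integrable_spike_finite[of "{}", rotated 2]) (use piece in auto)
  have "(\<lambda>s. \<bar>h (nat \<lfloor>s\<rfloor>) s\<bar>) integrable_on {0..t}"
    using integrable_on_piecewise_continuous[OF continuous_on_rabs[OF cont] \<open>0 \<le> t\<close>] .
  then have abs_integrable: "(\<lambda>s. \<bar>U s\<bar>) integrable_on {0..t}"
    by (rule integrable_spike_finite[of "{}", rotated 2]) (use piece in auto)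
  show ?thesis
    by (rule absolutely_integrable_integrable_bound[OF _ integrable abs_integrable]) simp
qed

lemma cl_state_step_control:
  assumes "b \<noteq> 0" "0 \<le> t" "c 0 = 0"
    and U: "\<And>s. 0 \<le> s \<Longrightarrow> U s \<omega> = - exp (a * s) * (c (Suc (nat \<lfloor>s\<rfloor>)) - c (nat \<lfloor>s\<rfloor>)) / b"
  shows "cl_state a b X0 U t \<omega> = exp (a * t) * (X0 \<omega> - lin_interp c t)"
proof -
  have "((\<lambda>s. c (Suc (nat \<lfloor>s\<rfloor>)) - c (nat \<lfloor>s\<rfloor>)) has_integral lin_interp c t) {0..t}"
    using has_integral_step_increments[OF \<open>0 \<le> t\<close>, of c] \<open>c 0 = 0\<close> by simp
  then have scaled: "((\<lambda>s. - exp (a * t) * (c (Suc (nat \<lfloor>s\<rfloor>)) - c (nat \<lfloor>s\<rfloor>))) has_integral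
          - exp (a * t) * lin_interp c t) {0..t}"
    by (rule has_integral_mult_right)
  have integrand: "exp (a * (t - s)) * b * U s \<omega> = - exp (a * t) * (c (Suc (nat \<lfloor>s\<rfloor>)) - c (nat \<lfloor>s\<rfloor>))"
    if "s \<in> {0..t}" for s
  proof -
    have "exp (a * (t - s)) * exp (a * s) = exp (a * t)"
      by (simp add: algebra_simps flip: exp_add)
    moreover have "b * U s \<omega> = - exp (a * s) * (c (Suc (nat \<lfloor>s\<rfloor>)) - c (nat \<lfloor>s\<rfloor>))"
      using U[of s] that \<open>b \<noteq> 0\<close> by simp
    ultimately show ?thesis
      by (simp add: mult.assoc)
  qed
  have "((\<lambda>s. exp (a * (t - s)) * b * U s \<omega>) has_integral - exp (a * t) * lin_interp c t) {0..t}"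
    by (rule has_integral_spike_finite[of "{}", OF _ _ scaled]) (use integrand in auto)
  then have "integral {0..t} (\<lambda>s. exp (a * (t - s)) * b * U s \<omega>) = - exp (a * t) * lin_interp c t"
    by (rule integral_unique)
  then show ?thesis
    unfolding cl_state_def by (simp add: algebra_simps)
qed

lemma lin_interp_tracking_error:
  assumes "0 \<le> a" "1 \<le> t"
    and c: "\<And>n. 0 < n \<Longrightarrow> c n = x - exp (- a * (real n - 1)) * e (real n - 1)"
  shows "\<bar>exp (a * t) * (x - lin_interp c t)\<bar>
           \<le> exp (2 * a) * (\<bar>e (real (nat \<lfloor>t\<rfloor>) - 1)\<bar> + \<bar>e (real (nat \<lfloor>t\<rfloor>))\<bar>)"
proof -
  define n where "n = nat \<lfloor>t\<rfloor>"
  define \<theta> where "\<theta> = t - real n"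
  have n: "1 \<le> n" "real n \<le> t" "t < real n + 1" unfolding n_def using \<open>1 \<le> t\<close> by linarith+
  have \<theta>: "0 \<le> \<theta>" "\<theta> \<le> 1" unfolding \<theta>_def using n by auto
  have interp: "x - lin_interp c t = (1 - \<theta>) * (x - c n) + \<theta> * (x - c (Suc n))"
    by (simp add: lin_interp_def algebra_simps flip: n_def \<theta>_def)
  have shift: "exp (a * t) * (x - c m) = exp (a * (t - (real m - 1))) * e (real m - 1)" if "0 < m" for m
  proof -
    have "exp (a * t) * exp (- a * (real m - 1)) = exp (a * (t - (real m - 1)))"
      by (simp add: algebra_simps flip: exp_add)
    then show ?thesis using c[OF that] by (simp add: mult.assoc[symmetric])
  qed
  have "exp (a * t) * (x - lin_interp c t)
      = (1 - \<theta>) * (exp (a * t) * (x - c n)) + \<theta> * (exp (a * t) * (x - c (Suc n)))"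
    unfolding interp by (simp add: algebra_simps)
  also have "\<dots> = (1 - \<theta>) * (exp (a * (t - (real n - 1))) * e (real n - 1))
      + \<theta> * (exp (a * (t - real n)) * e (real n))"
    using shift[of n] shift[of "Suc n"] n(1) by simp
  also have "\<bar>\<dots>\<bar> \<le> (1 - \<theta>) * (exp (2 * a) * \<bar>e (real n - 1)\<bar>) + \<theta> * (exp (2 * a) * \<bar>e (real n)\<bar>)"
  proof -
    have "a * (t - (real n - 1)) \<le> a * 2" "a * (t - real n) \<le> a * 2"
      using n \<open>0 \<le> a\<close> by (intro mult_left_mono; simp)+
    then have "exp (a * (t - (real n - 1))) \<le> exp (2 * a)" "exp (a * (t - real n)) \<le> exp (2 * a)"
      by (simp_all add: mult.commute)
    then show ?thesis
      using \<theta> by (intro order_trans[OF abs_triangle_ineq] add_mono)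
        (auto simp: abs_mult intro!: mult_left_mono mult_right_mono)
  qed
  also have "\<dots> = exp (2 * a) * ((1 - \<theta>) * \<bar>e (real n - 1)\<bar> + \<theta> * \<bar>e (real n)\<bar>)"
    by (simp add: algebra_simps)
  also have "\<dots> \<le> exp (2 * a) * (\<bar>e (real n - 1)\<bar> + \<bar>e (real n)\<bar>)"
    using \<theta> by (intro mult_left_mono add_mono) (auto simp: mult_left_le_one_le)
  finally show ?thesis unfolding n_def .
qed

lemma filterlim_nat_floor_minus_at_top:
  "filterlim (\<lambda>t::real. real (nat \<lfloor>t\<rfloor>) - d) at_top at_top"
proof (rule filterlim_at_top_mono[OF filterlim_tendsto_add_at_top[OF tendsto_const filterlim_ident]])
  show "\<forall>\<^sub>F t in at_top. - (d + 1) + t \<le> real (nat \<lfloor>t\<rfloor>) - d"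
    using eventually_ge_at_top[of "0::real"] by eventually_elim linarith
qed

lemma tendsto_zero_in_prob_dominated:
  assumes "prob_space M" and E: "tendsto_zero_in_prob M E"
    and [measurable]: "\<And>t. Z t \<in> borel_measurable M"
    and g: "filterlim g at_top at_top" and h: "filterlim h at_top at_top" and "0 < C"
    and bound: "\<forall>\<^sub>F t in at_top. \<forall>\<omega>\<in>space M. \<bar>Z t \<omega>\<bar> \<le> C * (\<bar>E (g t) \<omega>\<bar> + \<bar>E (h t) \<omega>\<bar>)"
  shows "tendsto_zero_in_prob M Z"
  unfolding tendsto_zero_in_prob_def
proof (intro conjI allI impI)
  interpret prob_space M by fact
  have [measurable]: "E t \<in> borel_measurable M" for t
    using E by (simp add: tendsto_zero_in_prob_def)
  fix e :: real assume "0 < e"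
  define e' where "e' = e / (2 * C)"
  have "0 < e'" using \<open>0 < e\<close> \<open>0 < C\<close> by (simp add: e'_def)
  define P where "P = (\<lambda>r. measure M {\<omega> \<in> space M. \<bar>E r \<omega>\<bar> > e'})"
  have "(P \<longlongrightarrow> 0) at_top"
    using E \<open>0 < e'\<close> by (simp add: tendsto_zero_in_prob_def P_def)
  then have lim: "((\<lambda>t. P (g t) + P (h t)) \<longlongrightarrow> 0) at_top"
    using tendsto_add[OF filterlim_compose[OF _ g] filterlim_compose[OF _ h]] by fastforce
  have "\<forall>\<^sub>F t in at_top. measure M {\<omega> \<in> space M. \<bar>Z t \<omega>\<bar> > e} \<le> P (g t) + P (h t)"
    using bound
  proof eventually_elim
    case (elim t)
    have "{\<omega> \<in> space M. \<bar>Z t \<omega>\<bar> > e}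
        \<subseteq> {\<omega> \<in> space M. \<bar>E (g t) \<omega>\<bar> > e'} \<union> {\<omega> \<in> space M. \<bar>E (h t) \<omega>\<bar> > e'}"
    proof (intro subsetI, rule ccontr)
      fix \<omega> assume \<omega>: "\<omega> \<in> {\<omega> \<in> space M. \<bar>Z t \<omega>\<bar> > e}"
        and "\<omega> \<notin> {\<omega> \<in> space M. \<bar>E (g t) \<omega>\<bar> > e'} \<union> {\<omega> \<in> space M. \<bar>E (h t) \<omega>\<bar> > e'}"
      then have "C * (\<bar>E (g t) \<omega>\<bar> + \<bar>E (h t) \<omega>\<bar>) \<le> C * (e' + e')"
        using \<open>0 < C\<close> by (intro mult_left_mono add_mono) auto
      also have "\<dots> = e" using \<open>0 < C\<close> by (simp add: e'_def)
      finally show False using elim \<omega> by fastforce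
    qed
    then have "measure M {\<omega> \<in> space M. \<bar>Z t \<omega>\<bar> > e}
        \<le> measure M ({\<omega> \<in> space M. \<bar>E (g t) \<omega>\<bar> > e'} \<union> {\<omega> \<in> space M. \<bar>E (h t) \<omega>\<bar> > e'})"
      by (rule finite_measure_mono) measurable
    also have "\<dots> \<le> P (g t) + P (h t)"
      unfolding P_def by (rule measure_Un_le) measurable
    finally show ?case .
  qed
  then show "((\<lambda>t. measure M {\<omega> \<in> space M. \<bar>Z t \<omega>\<bar> > e}) \<longlongrightarrow> 0) at_top"
    by (intro tendsto_sandwich[OF _ _ tendsto_const lim]) auto
qed (fact assms)


lemma cl_state_tendsto_zero_in_prob:
  assumes "prob_space M" "0 < a" and E: "tendsto_zero_in_prob M E"
    and [measurable]: "X0 \<in> borel_measurable M"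
    and closed_loop: "\<And>t \<omega>. \<omega> \<in> space M \<Longrightarrow> 0 \<le> t \<Longrightarrow>
          cl_state a b X0 U t \<omega> = exp (a * t) * (X0 \<omega> - lin_interp (c \<omega>) t)"
    and c0: "\<And>\<omega>. c \<omega> 0 = 0"
    and c: "\<And>\<omega> n. 0 < n \<Longrightarrow> c \<omega> n = X0 \<omega> - exp (- a * (real n - 1)) * E (real n - 1) \<omega>"
  shows "tendsto_zero_in_prob M (cl_state a b X0 U)"
proof (rule tendsto_zero_in_prob_dominated[OF assms(1) E])
  have [measurable]: "E t \<in> borel_measurable M" for t
    using E by (simp add: tendsto_zero_in_prob_def)
  show "cl_state a b X0 U t \<in> borel_measurable M" for t
  proof (cases "0 \<le> t")
    case True
    have [measurable]: "(\<lambda>\<omega>. c \<omega> n) \<in> borel_measurable M" for n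
      by (cases "n = 0") (simp_all add: c0 c)
    have "(\<lambda>\<omega>. exp (a * t) * (X0 \<omega> - lin_interp (c \<omega>) t)) \<in> borel_measurable M"
      unfolding lin_interp_def by measurable
    then show ?thesis
      by (subst measurable_cong[where g = "\<lambda>\<omega>. exp (a * t) * (X0 \<omega> - lin_interp (c \<omega>) t)"])
        (simp_all add: closed_loop True)
  next
    case False
    then have "cl_state a b X0 U t = (\<lambda>\<omega>. exp (a * t) * X0 \<omega>)"
      by (simp add: cl_state_def fun_eq_iff)
    then show ?thesis by simp
  qed
  show "\<forall>\<^sub>F t in at_top. \<forall>\<omega>\<in>space M. \<bar>cl_state a b X0 U t \<omega>\<bar>
          \<le> exp (2 * a) * (\<bar>E (real (nat \<lfloor>t\<rfloor>) - 1) \<omega>\<bar> + \<bar>E (real (nat \<lfloor>t\<rfloor>)) \<omega>\<bar>)"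
    using eventually_ge_at_top[of 1]
  proof eventually_elim
    case (elim t)
    show ?case
    proof
      fix \<omega> assume "\<omega> \<in> space M"
      have "\<bar>exp (a * t) * (X0 \<omega> - lin_interp (c \<omega>) t)\<bar>
          \<le> exp (2 * a) * (\<bar>E (real (nat \<lfloor>t\<rfloor>) - 1) \<omega>\<bar> + \<bar>E (real (nat \<lfloor>t\<rfloor>)) \<omega>\<bar>)"
        by (rule lin_interp_tracking_error[where c = "c \<omega>" and e = "\<lambda>m. E m \<omega>"])
          (use \<open>0 < a\<close> elim c in simp_all)
      then show "\<bar>cl_state a b X0 U t \<omega>\<bar>
          \<le> exp (2 * a) * (\<bar>E (real (nat \<lfloor>t\<rfloor>) - 1) \<omega>\<bar> + \<bar>E (real (nat \<lfloor>t\<rfloor>)) \<omega>\<bar>)"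
        using closed_loop[OF \<open>\<omega> \<in> space M\<close>] elim by simp
    qed
  qed
qed (use filterlim_nat_floor_minus_at_top[of 1] filterlim_nat_floor_minus_at_top[of 0] in simp_all)

text \<open>The controller sees only the current observation. The observation at an earlier time m is
  recovered from it, since the partial sums of the inter-reception times are the reception times.\<close>

definition trunc_obs :: "real \<Rightarrow> (nat \<Rightarrow> real option) \<Rightarrow> nat \<Rightarrow> real option" where
  "trunc_obs m ob = (\<lambda>j. if (\<forall>k\<le>j. ob k \<noteq> None) \<and> (\<Sum>k\<le>j. the (ob k)) \<le> m then ob j else None)"

lemma rec_time_mono:
  assumes "\<forall>j. 0 \<le> D j \<omega>" "k \<le> j"
  shows "rec_time D k \<omega> \<le> rec_time D j \<omega>"
  unfolding rec_time_def using assms by (intro sum_mono2) auto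

lemma trunc_obs_obs:
  assumes nonneg: "\<forall>j. 0 \<le> D j \<omega>" and "m \<le> t"
  shows "trunc_obs m (obs D t \<omega>) = obs D m \<omega>"
proof
  fix j
  have sum_obs: "(\<Sum>k\<le>j. the (obs D t \<omega> k)) = rec_time D j \<omega>"
    if "\<forall>k\<le>j. obs D t \<omega> k \<noteq> None"
    using that unfolding rec_time_def by (intro sum.cong) (auto simp: obs_def split: if_splits)
  show "trunc_obs m (obs D t \<omega>) j = obs D m \<omega> j"
  proof (cases "rec_time D j \<omega> \<le> m")
    case True
    have "rec_time D k \<omega> \<le> t" if "k \<le> j" for k
      using rec_time_mono[of D \<omega>, OF nonneg that] True \<open>m \<le> t\<close> by linarith
    then have "\<forall>k\<le>j. obs D t \<omega> k \<noteq> None"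
      by (simp add: obs_def)
    then show ?thesis
      using True sum_obs \<open>m \<le> t\<close> by (auto simp: trunc_obs_def obs_def)
  next
    case False
    then have "\<not> ((\<forall>k\<le>j. obs D t \<omega> k \<noteq> None) \<and> (\<Sum>k\<le>j. the (obs D t \<omega> k)) \<le> m)"
      using sum_obs by auto
    then show ?thesis
      using False unfolding trunc_obs_def by (simp add: obs_def)
  qed
qed

text \<open>Entry n is the estimate v(n - 1) of the initial state; entry 0 is the starting value 0.\<close>

definition init_estimate ::
  "real \<Rightarrow> (real \<Rightarrow> 'k \<Rightarrow> (nat \<Rightarrow> real option) \<Rightarrow> real) \<Rightarrow> 'k \<Rightarrow> (nat \<Rightarrow> real option) \<Rightarrow> nat \<Rightarrow> real"
where
  "init_estimate a est k ob n =
     (if n = 0 then 0 else exp (- a * (real n - 1)) * est (real n - 1) k (trunc_obs (real n - 1) ob))"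

definition steering_ctrl ::
  "real \<Rightarrow> real \<Rightarrow> (real \<Rightarrow> 'k \<Rightarrow> (nat \<Rightarrow> real option) \<Rightarrow> real) \<Rightarrow> real \<Rightarrow> 'k \<Rightarrow> (nat \<Rightarrow> real option) \<Rightarrow> real"
where
  "steering_ctrl a b est t k ob =
     - exp (a * t) * (init_estimate a est k ob (Suc (nat \<lfloor>t\<rfloor>)) - init_estimate a est k ob (nat \<lfloor>t\<rfloor>)) / b"

lemma steering_ctrl_obs:
  assumes "\<forall>j. 0 \<le> D j \<omega>" "0 \<le> s" "c 0 = 0"
    and c: "\<And>n. 0 < n \<Longrightarrow> c n = exp (- a * (real n - 1)) * est (real n - 1) k (obs D (real n - 1) \<omega>)"
  shows "steering_ctrl a b est s k (obs D s \<omega>) = - exp (a * s) * (c (Suc (nat \<lfloor>s\<rfloor>)) - c (nat \<lfloor>s\<rfloor>)) / b"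
proof -
  have "init_estimate a est k (obs D s \<omega>) n = c n" if "n \<le> Suc (nat \<lfloor>s\<rfloor>)" for n
  proof (cases "n = 0")
    case False
    have "real n - 1 \<le> s" using that \<open>0 \<le> s\<close> by linarith
    then show ?thesis
      using False c[of n] trunc_obs_obs[of D \<omega>, OF assms(1)] by (simp add: init_estimate_def)
  qed (simp add: init_estimate_def \<open>c 0 = 0\<close>)
  then show ?thesis by (simp add: steering_ctrl_def)
qed

lemma admissible_encoder_init_measurable:
  assumes "prob_space M" "admissible_encoder M X0 S K enc"
  shows "X0 \<in> borel_measurable M"
proof -
  interpret prob_space M by fact
  have "indep_vars (\<lambda>_. borel) (rvs X0 K S) UNIV"
    using assms(2) by (simp add: admissible_encoder_def)
  then have "rvs X0 K S Init \<in> borel_measurable M"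
    unfolding indep_vars_def2 by blast
  then show ?thesis by simp
qed

lemma delays_of_nonneg:
  assumes "admissible_encoder M X0 S K enc" "\<forall>i. 0 \<le> S i \<omega>"
  shows "0 \<le> delays_of X0 S K enc j \<omega>"
  using assms by (simp add: admissible_encoder_def delays_of_def inter_rec_def)

theorem lemma3:
  fixes M :: "'a measure" and X0 :: "'a \<Rightarrow> real" and S :: "nat \<Rightarrow> 'a \<Rightarrow> real"
    and a b L :: real and fX :: "real \<Rightarrow> real"
  assumes "prob_space M"
    and "a > 0" and "b \<noteq> 0"
    and "information_space.finite_entropy M 2 lborel X0 fX"
    and "\<forall>\<omega>\<in>space M. \<bar>X0 \<omega>\<bar> < L"
    and "prob_space.indep_vars M (\<lambda>_. borel) (\<lambda>j. case j of None \<Rightarrow> X0 | Some i \<Rightarrow> S i) UNIV"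
    and "\<forall>i. distr M borel (S i) = distr M borel (S 0)"
    and "\<forall>i. \<forall>\<omega>\<in>space M. 0 \<le> S i \<omega>"
    and "\<exists>K enc est. admissible_encoder M X0 S K enc \<and>
           tendsto_zero_in_prob M
             (\<lambda>t \<omega>. exp (a * t) * X0 \<omega> - est t (K \<omega>) (obs (delays_of X0 S K enc) t \<omega>))"
  shows "\<exists>K enc ctrl. admissible_encoder M X0 S K enc \<and>
           (let U = (\<lambda>t \<omega>. ctrl t (K \<omega>) (obs (delays_of X0 S K enc) t \<omega>)) in
             (\<forall>\<omega>\<in>space M. \<forall>t\<ge>0. (\<lambda>s. U s \<omega>) absolutely_integrable_on {0..t}) \<and>
             tendsto_zero_in_prob M (cl_state a b X0 U))"
proof -
  obtain K enc est where adm: "admissible_encoder M X0 S K enc"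
    and open_loop: "tendsto_zero_in_prob M
          (\<lambda>t \<omega>. exp (a * t) * X0 \<omega> - est t (K \<omega>) (obs (delays_of X0 S K enc) t \<omega>))"
    using assms(9) by blast
  define D where "D = delays_of X0 S K enc"
  define E where "E = (\<lambda>t \<omega>. exp (a * t) * X0 \<omega> - est t (K \<omega>) (obs D t \<omega>))"
  define c where "c = (\<lambda>\<omega> n. if n = 0 then 0 else X0 \<omega> - exp (- a * (real n - 1)) * E (real n - 1) \<omega>)"
  define U where "U = (\<lambda>t \<omega>. steering_ctrl a b est t (K \<omega>) (obs D t \<omega>))"
  have U: "U s \<omega> = - exp (a * s) * (c \<omega> (Suc (nat \<lfloor>s\<rfloor>)) - c \<omega> (nat \<lfloor>s\<rfloor>)) / b"
    if "\<omega> \<in> space M" "0 \<le> s" for s \<omega>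
    unfolding U_def
  proof (rule steering_ctrl_obs[where c = "c \<omega>"])
    show "\<forall>j. 0 \<le> D j \<omega>"
      using delays_of_nonneg[OF adm] assms(8) that(1) by (simp add: D_def)
    show "c \<omega> n = exp (- a * (real n - 1)) * est (real n - 1) (K \<omega>) (obs D (real n - 1) \<omega>)" if "0 < n" for n
    proof -
      have "exp (- a * (real n - 1)) * exp (a * (real n - 1)) = 1"
        by (simp flip: exp_add)
      then show ?thesis
        using that by (simp add: c_def E_def right_diff_distrib mult.assoc[symmetric])
    qed
  qed (simp_all add: c_def \<open>0 \<le> s\<close>)
  have "tendsto_zero_in_prob M (cl_state a b X0 U)"
  proof (rule cl_state_tendsto_zero_in_prob[OF assms(1,2)])
    show "tendsto_zero_in_prob M E"
      using open_loop by (simp add: E_def D_def)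
    show "cl_state a b X0 U t \<omega> = exp (a * t) * (X0 \<omega> - lin_interp (c \<omega>) t)"
      if "\<omega> \<in> space M" "0 \<le> t" for t \<omega>
      by (rule cl_state_step_control[where c = "c \<omega>" and U = U and \<omega> = \<omega> and a = a,
            OF assms(3) that(2) _ U[OF that(1)]]) (simp add: c_def)
  qed (use admissible_encoder_init_measurable[OF assms(1) adm] in \<open>simp_all add: c_def\<close>)
  moreover have "(\<lambda>s. U s \<omega>) absolutely_integrable_on {0..t}" if "\<omega> \<in> space M" "0 \<le> t" for \<omega> t
    by (rule step_control_absolutely_integrable[where c = "c \<omega>", OF that(2) U[OF that(1)]])
  ultimately have "admissible_encoder M X0 S K enc \<and>
      (\<forall>\<omega>\<in>space M. \<forall>t\<ge>0. (\<lambda>s. U s \<omega>) absolutely_integrable_on {0..t}) \<and>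
      tendsto_zero_in_prob M (cl_state a b X0 U)"
    using adm by blast
  then show ?thesis
    unfolding Let_def U_def D_def by (rule exI[of _ K, OF exI[of _ enc, OF exI[of _ "steering_ctrl a b est"]]])
qed

end
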